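(* For every extended pseudometric space $(S,d)$ there exists a 2-weighted 2-category $(\mathsf C,\mathrm W)$ with $\mathsf C_0=S$ such that $d_{\mathsf C,\mathrm W}=d$.
   Context: An extended pseudometric on $S$ is $d:S\times S\to[0,\infty]$ with $d(x,x)=0$, symmetry, and the triangle inequality. A 2-weighted 2-category is a strict 2-category $\mathsf C$ with functions $\mathrm W_1$ on 1-morphisms and $\mathrm W_2$ on 2-morphisms, valued in $\mathbb R_{\ge0}$ (allowing the value $\infty$ is not needed beyond what the statement requires; values in $[0,\infty]$ are permitted), vanishing on identity 1- and 2-morphisms, subadditive under composition of 1-morphisms and under vertical and horizontal composition of 2-morphisms. Its interleaving distance is $d_{\mathsf C,\mathrm W}(A,B)=\inf\{t\ge0\}$ over $t$ for which there exist $g:A\to B$, $h:B\to A$, $\alpha:1_A\Rightarrow hg$, $\beta:1_B\Rightarrow gh$ with $\max\{\mathrm W_1(g),\mathrm W_1(h),\mathrm W_2(\alpha),\mathrm W_2(\beta)\}\le t$ (infimum of the empty set is $\infty$). *)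

theory Defs
  imports Main "HOL-Library.Extended_Nonnegative_Real"
begin

definition ext_pseudometric :: "'a set \<Rightarrow> ('a \<Rightarrow> 'a \<Rightarrow> ennreal) \<Rightarrow> bool" where
  "ext_pseudometric S d \<longleftrightarrow>
     (\<forall>x\<in>S. d x x = 0) \<and>
     (\<forall>x\<in>S. \<forall>y\<in>S. d x y = d y x) \<and>
     (\<forall>x\<in>S. \<forall>y\<in>S. \<forall>z\<in>S. d x z \<le> d x y + d y z)"

text \<open>Data of a (strict) 2-category: objects, 1-morphisms with domain/codomain,
  identities and composition (comp1 g f = g after f), 2-morphisms with source/target
  1-morphisms, identity 2-morphisms, vertical composition (vcomp b a = b after a) and
  horizontal composition (hcomp b a, where a lives over A to B and b over B to C).\<close>
record ('o, 'm, 'n) two_cat =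
  ob :: "'o set"
  ar1 :: "'m set"
  dom1 :: "'m \<Rightarrow> 'o"
  cod1 :: "'m \<Rightarrow> 'o"
  id1 :: "'o \<Rightarrow> 'm"
  comp1 :: "'m \<Rightarrow> 'm \<Rightarrow> 'm"
  ar2 :: "'n set"
  src2 :: "'n \<Rightarrow> 'm"
  tgt2 :: "'n \<Rightarrow> 'm"
  id2 :: "'m \<Rightarrow> 'n"
  vcomp :: "'n \<Rightarrow> 'n \<Rightarrow> 'n"
  hcomp :: "'n \<Rightarrow> 'n \<Rightarrow> 'n"

definition strict_2cat :: "('o, 'm, 'n, 'z) two_cat_scheme \<Rightarrow> bool" where
  "strict_2cat C \<longleftrightarrow>
    \<comment> \<open>1-categorical structure\<close>
    (\<forall>f\<in>ar1 C. dom1 C f \<in> ob C \<and> cod1 C f \<in> ob C) \<and>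
    (\<forall>A\<in>ob C. id1 C A \<in> ar1 C \<and> dom1 C (id1 C A) = A \<and> cod1 C (id1 C A) = A) \<and>
    (\<forall>f\<in>ar1 C. \<forall>g\<in>ar1 C. cod1 C f = dom1 C g \<longrightarrow>
        comp1 C g f \<in> ar1 C \<and> dom1 C (comp1 C g f) = dom1 C f \<and> cod1 C (comp1 C g f) = cod1 C g) \<and>
    (\<forall>f\<in>ar1 C. comp1 C f (id1 C (dom1 C f)) = f \<and> comp1 C (id1 C (cod1 C f)) f = f) \<and>
    (\<forall>f\<in>ar1 C. \<forall>g\<in>ar1 C. \<forall>h\<in>ar1 C. cod1 C f = dom1 C g \<longrightarrow> cod1 C g = dom1 C h \<longrightarrow>
        comp1 C h (comp1 C g f) = comp1 C (comp1 C h g) f) \<and>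
    \<comment> \<open>2-morphisms go between parallel 1-morphisms\<close>
    (\<forall>a\<in>ar2 C. src2 C a \<in> ar1 C \<and> tgt2 C a \<in> ar1 C \<and>
        dom1 C (src2 C a) = dom1 C (tgt2 C a) \<and> cod1 C (src2 C a) = cod1 C (tgt2 C a)) \<and>
    \<comment> \<open>vertical composition: category structure on each hom\<close>
    (\<forall>f\<in>ar1 C. id2 C f \<in> ar2 C \<and> src2 C (id2 C f) = f \<and> tgt2 C (id2 C f) = f) \<and>
    (\<forall>a\<in>ar2 C. \<forall>b\<in>ar2 C. tgt2 C a = src2 C b \<longrightarrow>
        vcomp C b a \<in> ar2 C \<and> src2 C (vcomp C b a) = src2 C a \<and> tgt2 C (vcomp C b a) = tgt2 C b) \<and>
    (\<forall>a\<in>ar2 C. vcomp C a (id2 C (src2 C a)) = a \<and> vcomp C (id2 C (tgt2 C a)) a = a) \<and>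
    (\<forall>a\<in>ar2 C. \<forall>b\<in>ar2 C. \<forall>c\<in>ar2 C. tgt2 C a = src2 C b \<longrightarrow> tgt2 C b = src2 C c \<longrightarrow>
        vcomp C c (vcomp C b a) = vcomp C (vcomp C c b) a) \<and>
    \<comment> \<open>horizontal composition\<close>
    (\<forall>a\<in>ar2 C. \<forall>b\<in>ar2 C. cod1 C (src2 C a) = dom1 C (src2 C b) \<longrightarrow>
        hcomp C b a \<in> ar2 C \<and>
        src2 C (hcomp C b a) = comp1 C (src2 C b) (src2 C a) \<and>
        tgt2 C (hcomp C b a) = comp1 C (tgt2 C b) (tgt2 C a)) \<and>
    (\<forall>a\<in>ar2 C. hcomp C (id2 C (id1 C (cod1 C (src2 C a)))) a = a \<and>
               hcomp C a (id2 C (id1 C (dom1 C (src2 C a)))) = a) \<and>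
    (\<forall>a\<in>ar2 C. \<forall>b\<in>ar2 C. \<forall>c\<in>ar2 C.
        cod1 C (src2 C a) = dom1 C (src2 C b) \<longrightarrow> cod1 C (src2 C b) = dom1 C (src2 C c) \<longrightarrow>
        hcomp C c (hcomp C b a) = hcomp C (hcomp C c b) a) \<and>
    \<comment> \<open>functoriality of horizontal composition (identities and interchange law)\<close>
    (\<forall>f\<in>ar1 C. \<forall>g\<in>ar1 C. cod1 C f = dom1 C g \<longrightarrow>
        hcomp C (id2 C g) (id2 C f) = id2 C (comp1 C g f)) \<and>
    (\<forall>a\<in>ar2 C. \<forall>b\<in>ar2 C. \<forall>c\<in>ar2 C. \<forall>e\<in>ar2 C.
        tgt2 C a = src2 C b \<longrightarrow> tgt2 C c = src2 C e \<longrightarrow> cod1 C (src2 C a) = dom1 C (src2 C c) \<longrightarrow>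
        hcomp C (vcomp C e c) (vcomp C b a) = vcomp C (hcomp C e b) (hcomp C c a))"

definition weighted_2cat ::
  "('o, 'm, 'n, 'z) two_cat_scheme \<Rightarrow> ('m \<Rightarrow> ennreal) \<Rightarrow> ('n \<Rightarrow> ennreal) \<Rightarrow> bool" where
  "weighted_2cat C W1 W2 \<longleftrightarrow>
    strict_2cat C \<and>
    (\<forall>A\<in>ob C. W1 (id1 C A) = 0) \<and>
    (\<forall>f\<in>ar1 C. W2 (id2 C f) = 0) \<and>
    (\<forall>f\<in>ar1 C. \<forall>g\<in>ar1 C. cod1 C f = dom1 C g \<longrightarrow> W1 (comp1 C g f) \<le> W1 g + W1 f) \<and>
    (\<forall>a\<in>ar2 C. \<forall>b\<in>ar2 C. tgt2 C a = src2 C b \<longrightarrow> W2 (vcomp C b a) \<le> W2 b + W2 a) \<and>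
    (\<forall>a\<in>ar2 C. \<forall>b\<in>ar2 C. cod1 C (src2 C a) = dom1 C (src2 C b) \<longrightarrow>
        W2 (hcomp C b a) \<le> W2 b + W2 a)"

text \<open>Interleaving distance; the infimum of the empty set in ennreal is \<infinity>.\<close>
definition interleaving_dist ::
  "('o, 'm, 'n, 'z) two_cat_scheme \<Rightarrow> ('m \<Rightarrow> ennreal) \<Rightarrow> ('n \<Rightarrow> ennreal) \<Rightarrow> 'o \<Rightarrow> 'o \<Rightarrow> ennreal" where
  "interleaving_dist C W1 W2 A B = Inf {t. \<exists>g h a b.
      g \<in> ar1 C \<and> dom1 C g = A \<and> cod1 C g = B \<and>
      h \<in> ar1 C \<and> dom1 C h = B \<and> cod1 C h = A \<and>
      a \<in> ar2 C \<and> src2 C a = id1 C A \<and> tgt2 C a = comp1 C h g \<and>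
      b \<in> ar2 C \<and> src2 C b = id1 C B \<and> tgt2 C b = comp1 C g h \<and>
      max (max (W1 g) (W1 h)) (max (W2 a) (W2 b)) \<le> t}"

end

theory Submission
  imports Defs
begin

text \<open>Any extended pseudometric is realised by the indiscrete 2-category on S: exactly one
  1-morphism x \<rightarrow> y for every pair of points, weighted by d x y, and only identity
  2-morphisms, weighted 0. The triangle inequality makes the 1-weight subadditive. Since
  all composites A \<rightarrow> B \<rightarrow> A equal the identity of A, the units of an interleaving are
  identities, so the interleaving distance of A and B is max (d A B) (d B A) = d A B.\<close>

text \<open>The nat tags of 1- and 2-morphisms are always 0; they are only there because the
  statement fixes the types of morphisms.\<close>
definition indiscrete_2cat ::
  "'a set \<Rightarrow> ('a, 'a \<times> 'a \<times> nat, ('a \<times> 'a \<times> nat) \<times> ('a \<times> 'a \<times> nat) \<times> nat) two_cat" where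
  "indiscrete_2cat S = \<lparr> ob = S, ar1 = S \<times> S \<times> {0},
     dom1 = fst, cod1 = (\<lambda>f. fst (snd f)), id1 = (\<lambda>x. (x, x, 0)),
     comp1 = (\<lambda>g f. (fst f, fst (snd g), 0)),
     ar2 = (\<lambda>f. (f, f, 0)) ` (S \<times> S \<times> {0}),
     src2 = fst, tgt2 = (\<lambda>a. fst (snd a)), id2 = (\<lambda>f. (f, f, 0)),
     vcomp = (\<lambda>b a. a),
     hcomp = (\<lambda>b a. ((fst (fst a), fst (snd (fst b)), 0), (fst (fst a), fst (snd (fst b)), 0), 0)) \<rparr>"

lemma strict_2cat_indiscrete_2cat: "strict_2cat (indiscrete_2cat S)"
  unfolding strict_2cat_def indiscrete_2cat_def by auto

lemma weighted_2cat_indiscrete_2cat: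
  assumes "\<forall>x\<in>S. w x x = 0"
    and "\<forall>x\<in>S. \<forall>y\<in>S. \<forall>z\<in>S. w x z \<le> w x y + w y z"
  shows "weighted_2cat (indiscrete_2cat S) (\<lambda>f. w (fst f) (fst (snd f))) (\<lambda>_. 0)"
  using assms strict_2cat_indiscrete_2cat
  unfolding weighted_2cat_def by (auto simp: indiscrete_2cat_def add.commute)

lemma interleaving_dist_indiscrete_2cat:
  assumes "A \<in> S" "B \<in> S"
  shows "interleaving_dist (indiscrete_2cat S) (\<lambda>f. w (fst f) (fst (snd f))) (\<lambda>_. 0) A B
           = max (w A B) (w B A)"
proof -
  have "interleaving_dist (indiscrete_2cat S) (\<lambda>f. w (fst f) (fst (snd f))) (\<lambda>_. 0) A B
          = Inf {max (w A B) (w B A)..}"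
    unfolding interleaving_dist_def atLeast_def
    using assms by (intro arg_cong[where f = Inf]) (auto simp: indiscrete_2cat_def)
  then show ?thesis by simp
qed

theorem corollary5p5:
  fixes S :: "'a set" and d :: "'a \<Rightarrow> 'a \<Rightarrow> ennreal"
  assumes "ext_pseudometric S d"
  shows "\<exists>(C :: ('a, 'a \<times> 'a \<times> nat, ('a \<times> 'a \<times> nat) \<times> ('a \<times> 'a \<times> nat) \<times> nat) two_cat)
           W1 W2. weighted_2cat C W1 W2 \<and> ob C = S \<and>
           (\<forall>A\<in>S. \<forall>B\<in>S. interleaving_dist C W1 W2 A B = d A B)"
proof (intro exI conjI ballI)
  let ?W1 = "\<lambda>f. d (fst f) (fst (snd f))"
  show "weighted_2cat (indiscrete_2cat S) ?W1 (\<lambda>_. 0)"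
    using assms unfolding ext_pseudometric_def by (intro weighted_2cat_indiscrete_2cat) auto
  show "ob (indiscrete_2cat S) = S"
    by (simp add: indiscrete_2cat_def)
  fix A B assume "A \<in> S" "B \<in> S"
  moreover have "d B A = d A B"
    using assms \<open>A \<in> S\<close> \<open>B \<in> S\<close> unfolding ext_pseudometric_def by auto
  ultimately show "interleaving_dist (indiscrete_2cat S) ?W1 (\<lambda>_. 0) A B = d A B"
    by (simp add: interleaving_dist_indiscrete_2cat)
qed

end
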